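(* Consider a distributed index coding problem with $n$ messages, side-information sets $A_1,\dots,A_n$, and server capacities $\mathbf C=(C_J:J\in N)$. Let $U=\mathrm{cl}(\emptyset)$, and let $V\subseteq[n]\setminus U$ be a set of minimum cardinality with $\mathrm{cl}(U\cup V)=[n]$. Assume $V$ satisfies Condition 1, namely $V\subseteq\mathrm{cl}([n]\setminus V)$. Then every rate tuple $\mathbf R=(R_1,\dots,R_n)$ in the capacity region satisfies \[ \sum_{i\in[n]}R_i\le \sum_{J\in N}C_J+\sum_{J\in N:\ J\cap V\neq\emptyset,\ J\not\subseteq U\cup V}C_J . \]
   Context: A distributed index coding problem has $n$ messages $x_i\in\{0,1\}^{t_i}$ and $2^n-1$ servers, one for each $J\in N=\{J\subseteq[n]:J\neq\emptyset\}$. Server $J$ has access to $x(J)=(x_i:i\in J)$ and is connected to all receivers by a noiseless broadcast link of capacity $C_J\ge 0$. Receiver $i\in[n]$ wants $x_i$ and knows $x(A_i)$ for some $A_i\subseteq[n]\setminus\{i\}$. A $(\mathbf t,\mathbf r)$ distributed index code consists of encoders $\phi_J:\prod_{j\in J}\{0,1\}^{t_j}\to\{0,1\}^{r_J}$ and decoders $\psi_i$ mapping $(\phi_J(x(J)),J\in N)$ and $x(A_i)$ to $\hat x_i$. The messages $X_i$ are independent and uniform. A tuple $(\mathbf R,\mathbf C)$ is achievable if for every $\epsilon>0$ there exist a $(\mathbf t,\mathbf r)$ code and an integer $r$ with $R_i\le t_i/r$ for all $i$, $C_J\ge r_J/r$ for all $J$, and $\Pr\{(\hat X_1,\dots,\hat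 X_n)\neq(X_1,\dots,X_n)\}\le\epsilon$. The capacity region for given $\mathbf C$ is the closure of the set of $\mathbf R$ such that $(\mathbf R,\mathbf C)$ is achievable. For $T\subseteq[n]$, $\mathrm{cl}(T)$ is the smallest set $S\supseteq T$ such that for every $i\in[n]$ with $A_i\subseteq S$ we have $i\in S$. This is the set of messages recoverable from all server outputs together with $x(T)$ by repeatedly applying the receivers' decoding rules. A set $V$ satisfies Condition 1 if $V\subseteq\mathrm{cl}([n]\setminus V)$. If several minimum sets $V$ exist, the bound holds for each one that satisfies Condition 1. *)

theory Defs
  imports "HOL-Analysis.Analysis" "HOL-Probability.Probability"
begin

text \<open>Messages are indexed by [n] = {1..n}. A message tuple is a function
  nat \<Rightarrow> bool list; coordinates outside [n] are the empty list.\<close>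

definition servers :: "nat \<Rightarrow> nat set set" where
  "servers n = {J. J \<subseteq> {1..n} \<and> J \<noteq> {}}"

definition cl :: "nat \<Rightarrow> (nat \<Rightarrow> nat set) \<Rightarrow> nat set \<Rightarrow> nat set" where
  "cl n A T = \<Inter>{S. T \<subseteq> S \<and> (\<forall>i\<in>{1..n}. A i \<subseteq> S \<longrightarrow> i \<in> S)}"

definition restr :: "(nat \<Rightarrow> bool list) \<Rightarrow> nat set \<Rightarrow> nat \<Rightarrow> bool list" where
  "restr x J = (\<lambda>j. if j \<in> J then x j else [])"

definition msg_space :: "nat \<Rightarrow> (nat \<Rightarrow> nat) \<Rightarrow> (nat \<Rightarrow> bool list) set" where
  "msg_space n t = {x. (\<forall>i\<in>{1..n}. length (x i) = t i) \<and> (\<forall>i. i \<notin> {1..n} \<longrightarrow> x i = [])}"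

definition server_out ::
  "nat \<Rightarrow> (nat set \<Rightarrow> (nat \<Rightarrow> bool list) \<Rightarrow> bool list) \<Rightarrow> (nat \<Rightarrow> bool list) \<Rightarrow> nat set \<Rightarrow> bool list" where
  "server_out n phi x = (\<lambda>J. if J \<in> servers n then phi J (restr x J) else [])"

definition decoded ::
  "nat \<Rightarrow> (nat \<Rightarrow> nat set) \<Rightarrow> (nat set \<Rightarrow> (nat \<Rightarrow> bool list) \<Rightarrow> bool list)
   \<Rightarrow> (nat \<Rightarrow> (nat set \<Rightarrow> bool list) \<Rightarrow> (nat \<Rightarrow> bool list) \<Rightarrow> bool list)
   \<Rightarrow> (nat \<Rightarrow> bool list) \<Rightarrow> nat \<Rightarrow> bool list" where
  "decoded n A phi psi x i = psi i (server_out n phi x) (restr x (A i))"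

definition is_code ::
  "nat \<Rightarrow> (nat \<Rightarrow> nat set) \<Rightarrow> (nat \<Rightarrow> nat) \<Rightarrow> (nat set \<Rightarrow> nat)
   \<Rightarrow> (nat set \<Rightarrow> (nat \<Rightarrow> bool list) \<Rightarrow> bool list)
   \<Rightarrow> (nat \<Rightarrow> (nat set \<Rightarrow> bool list) \<Rightarrow> (nat \<Rightarrow> bool list) \<Rightarrow> bool list) \<Rightarrow> bool" where
  "is_code n A t r phi psi \<longleftrightarrow>
     (\<forall>J\<in>servers n. \<forall>x\<in>msg_space n t. length (phi J (restr x J)) = r J) \<and>
     (\<forall>i\<in>{1..n}. \<forall>x\<in>msg_space n t. length (decoded n A phi psi x i) = t i)"

definition error_prob ::
  "nat \<Rightarrow> (nat \<Rightarrow> nat set) \<Rightarrow> (nat \<Rightarrow> nat)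
   \<Rightarrow> (nat set \<Rightarrow> (nat \<Rightarrow> bool list) \<Rightarrow> bool list)
   \<Rightarrow> (nat \<Rightarrow> (nat set \<Rightarrow> bool list) \<Rightarrow> (nat \<Rightarrow> bool list) \<Rightarrow> bool list) \<Rightarrow> real" where
  "error_prob n A t phi psi =
     measure_pmf.prob (pmf_of_set (msg_space n t))
       {x. \<exists>i\<in>{1..n}. decoded n A phi psi x i \<noteq> x i}"

definition achievable ::
  "nat \<Rightarrow> (nat \<Rightarrow> nat set) \<Rightarrow> (nat \<Rightarrow> real) \<Rightarrow> (nat set \<Rightarrow> real) \<Rightarrow> bool" where
  "achievable n A R C \<longleftrightarrow>
     (\<forall>\<epsilon>>0. \<exists>t r phi psi (rr::nat). rr > 0 \<and> is_code n A t r phi psi \<and>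
        (\<forall>i\<in>{1..n}. R i \<le> real (t i) / real rr) \<and>
        (\<forall>J\<in>servers n. C J \<ge> real (r J) / real rr) \<and>
        error_prob n A t phi psi \<le> \<epsilon>)"

definition capacity_region ::
  "nat \<Rightarrow> (nat \<Rightarrow> nat set) \<Rightarrow> (nat set \<Rightarrow> real) \<Rightarrow> (nat \<Rightarrow> real) set" where
  "capacity_region n A C = closure {R. achievable n A R C}"

end

theory Submission
  imports Defs
begin

text \<open>Let \<open>W = [n] - (U \<union> V)\<close> and write \<open>x[W := w]\<close> for \<open>override_on x w W\<close>. If a code
  has error probability below 1/4, the set \<open>D\<close> of correctly decoded messages contains more than
  three quarters of all \<open>2\<^sup>T\<close> messages. Splitting messages into their part on \<open>W\<close> and the rest,
  an averaging argument yields \<open>w\<close> with \<open>2 |D| \<le> |{x \<in> D. x[W := w] \<in> D}| + 2\<^sup>T\<close>. Such an \<open>x\<close>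
  is determined by the outputs of all servers on \<open>x\<close> and of the crossing servers on \<open>x[W := w]\<close>:
  two candidates agree on \<open>cl({}) \<supseteq> U\<close>, so every other server sees the same input in both
  \<open>x[W := w]\<close>; decoding these recovers \<open>cl([n] - V) \<supseteq> V\<close>, and then decoding \<open>x\<close> recovers
  \<open>cl(U \<union> V) = [n]\<close>. With \<open>K\<close> output bits this gives \<open>2 |D| \<le> 2\<^sup>K + 2\<^sup>T\<close>, hence \<open>T \<le> K\<close>;
  dividing by the block length and passing to the closure gives the rate bound.\<close>

definition crossing_servers :: "nat \<Rightarrow> nat set \<Rightarrow> nat set \<Rightarrow> nat set set" where
  "crossing_servers n U V = {J \<in> servers n. J \<inter> V \<noteq> {} \<and> \<not> J \<subseteq> U \<union> V}"

definition correctly_decoded ::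
  "nat \<Rightarrow> (nat \<Rightarrow> nat set) \<Rightarrow> (nat \<Rightarrow> nat)
   \<Rightarrow> (nat set \<Rightarrow> (nat \<Rightarrow> bool list) \<Rightarrow> bool list)
   \<Rightarrow> (nat \<Rightarrow> (nat set \<Rightarrow> bool list) \<Rightarrow> (nat \<Rightarrow> bool list) \<Rightarrow> bool list)
   \<Rightarrow> (nat \<Rightarrow> bool list) set" where
  "correctly_decoded n A t phi psi =
     {x \<in> msg_space n t. \<forall>i\<in>{1..n}. decoded n A phi psi x i = x i}"


subsection \<open>An averaging argument on products\<close>

lemma exists_column_bound:
  fixes G :: "('p \<times> 'q) set"
  assumes "finite P" "finite Q" "Q \<noteq> {}" "G \<subseteq> P \<times> Q"
  shows "\<exists>q\<in>Q. 2 * card G \<le> card {z \<in> G. (fst z, q) \<in> G} + card P * card Q"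
proof -
  define S where "S q = {p. (p, q) \<in> G}" for q
  have fin_S: "finite (S q)" for q
    by (rule finite_subset[OF _ assms(1)]) (use assms(4) in \<open>auto simp: S_def\<close>)
  define m where "m = Max ((\<lambda>q. card (S q)) ` Q)"
  have "m \<in> (\<lambda>q. card (S q)) ` Q"
    unfolding m_def by (rule Max_in) (use assms(2,3) in auto)
  then obtain q where "q \<in> Q" "card (S q) = m"
    by auto
  moreover have "card (S q') \<le> m" if "q' \<in> Q" for q'
    unfolding m_def using assms(2) that by simp
  ultimately have q: "q \<in> Q" "\<forall>q'\<in>Q. card (S q') \<le> card (S q)"
    by auto
  have "G = (\<Union>q'\<in>Q. S q' \<times> {q'})"
    using assms(4) by (auto simp: S_def)
  then have "card G \<le> (\<Sum>q'\<in>Q. card (S q' \<times> {q'}))"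
    by (simp add: card_UN_le assms(2))
  also have "\<dots> \<le> (\<Sum>q'\<in>Q. card (S q))"
    using q(2) by (intro sum_mono) (simp add: card_cartesian_product)
  finally have column: "card G \<le> card Q * card (S q)"
    by simp
  define G\<^sub>q where "G\<^sub>q = {z \<in> G. (fst z, q) \<in> G}"
  have fin_G: "finite G"
    using assms(1,2,4) finite_subset by blast
  have "S q \<subseteq> P"
    using assms(4) q(1) by (auto simp: S_def)
  have "G - G\<^sub>q \<subseteq> (P - S q) \<times> Q"
    using assms(4) by (auto simp: G\<^sub>q_def S_def)
  then have "card (G - G\<^sub>q) \<le> card ((P - S q) \<times> Q)"
    using assms(1,2) by (intro card_mono) auto
  also have "\<dots> = card P * card Q - card (S q) * card Q"
    using \<open>S q \<subseteq> P\<close> fin_S by (simp add: card_cartesian_product card_Diff_subset diff_mult_distrib)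
  finally have rest: "card (G - G\<^sub>q) + card (S q) * card Q \<le> card P * card Q"
    using mult_le_mono1[OF card_mono[OF assms(1) \<open>S q \<subseteq> P\<close>], of "card Q"] by linarith
  have "G\<^sub>q \<subseteq> G"
    by (auto simp: G\<^sub>q_def)
  then have "card G = card G\<^sub>q + card (G - G\<^sub>q)"
    using fin_G by (simp add: card_Diff_subset card_mono finite_subset)
  then show ?thesis
    using q(1) column rest unfolding G\<^sub>q_def by (intro bexI[of _ q]) (simp_all add: mult.commute)
qed

text \<open>Identifying \<open>x\<close> with the pair (\<open>x\<close> off \<open>W\<close>, \<open>x\<close> on \<open>W\<close>), the closure hypothesis makes
  \<open>M\<close> a product set.\<close>

lemma exists_override_on_bound:
  fixes M G :: "('a \<Rightarrow> 'b) set"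
  assumes "finite M" "M \<noteq> {}" "G \<subseteq> M"
    and override_closed: "\<And>x w. x \<in> M \<Longrightarrow> w \<in> M \<Longrightarrow> override_on x w W \<in> M"
  shows "\<exists>w\<in>M. 2 * card G \<le> card {x \<in> G. override_on x w W \<in> G} + card M"
proof -
  define e where "e x = (restrict x (- W), restrict x W)" for x :: "'a \<Rightarrow> 'b"
  define P where "P = fst ` e ` M"
  define Q where "Q = snd ` e ` M"
  have "override_on (fst (e x)) (snd (e x)) W = x" for x
    by (simp add: e_def override_on_def fun_eq_iff)
  then have inj_e: "inj e"
    by (metis injI)
  then have card_e: "card (e ` X) = card X" for X
    by (simp add: card_image inj_on_subset)
  have e_override_on: "e (override_on x w W) = (fst (e x), snd (e w))" for w x
    by (simp add: e_def override_on_def fun_eq_iff)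
  have eM: "e ` M = P \<times> Q"
  proof
    show "P \<times> Q \<subseteq> e ` M"
    proof
      fix z assume "z \<in> P \<times> Q"
      then obtain x w where "x \<in> M" "w \<in> M" "z = (fst (e x), snd (e w))"
        by (auto simp: P_def Q_def)
      then show "z \<in> e ` M"
        using override_closed e_override_on by (metis image_eqI)
    qed
    show "e ` M \<subseteq> P \<times> Q"
      unfolding P_def Q_def by (simp add: image_subset_iff mem_Times_iff)
  qed
  have "finite P" "finite Q" "Q \<noteq> {}"
    using assms(1,2) by (simp_all add: P_def Q_def)
  moreover have "e ` G \<subseteq> P \<times> Q"
    using assms(3) eM by blast
  ultimately obtain q where "q \<in> Q" and
    q: "2 * card (e ` G) \<le> card {z \<in> e ` G. (fst z, q) \<in> e ` G} + card P * card Q"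
    using exists_column_bound by blast
  then obtain w where "w \<in> M" "q = snd (e w)"
    by (auto simp: Q_def)
  have "{z \<in> e ` G. (fst z, q) \<in> e ` G} = e ` {x \<in> G. override_on x w W \<in> G}"
    using inj_e by (auto simp: \<open>q = snd (e w)\<close> e_override_on[symmetric] inj_image_mem_iff
        dest: injD)
  moreover have "card M = card P * card Q"
    using card_e[of M] eM by (simp add: card_cartesian_product)
  ultimately show ?thesis
    using q \<open>w \<in> M\<close> card_e by (intro bexI[of _ w]) simp_all
qed

lemma card_bool_lists_length: "card {xs :: bool list. length xs = k} = 2 ^ k"
  using card_lists_length_eq[of "UNIV :: bool set" k] by simp

lemma finite_bool_lists_length: "finite {xs :: bool list. length xs = k}"
  using finite_lists_length_eq[of "UNIV :: bool set" k] by simp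

lemma bij_betw_msg_space_PiE:
  "bij_betw (\<lambda>x. restrict x {1..n}) (msg_space n t) (\<Pi>\<^sub>E i\<in>{1..n}. {xs :: bool list. length xs = t i})"
proof (rule bij_betw_byWitness[where f' = "\<lambda>f i. if i \<in> {1..n} then f i else []"])
qed (auto simp: msg_space_def fun_eq_iff PiE_def extensional_def)

lemma finite_msg_space: "finite (msg_space n t)"
  using bij_betw_finite[OF bij_betw_msg_space_PiE] by (simp add: finite_PiE finite_bool_lists_length)

lemma card_msg_space: "card (msg_space n t) = 2 ^ (\<Sum>i\<in>{1..n}. t i)"
  using bij_betw_same_card[OF bij_betw_msg_space_PiE]
  by (simp add: card_PiE card_bool_lists_length power_sum)

lemma msg_space_not_empty: "msg_space n t \<noteq> {}"
proof -
  have "(\<lambda>i. if i \<in> {1..n} then replicate (t i) False else []) \<in> msg_space n t"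
    by (auto simp: msg_space_def)
  then show ?thesis by blast
qed

lemma override_on_in_msg_space:
  "x \<in> msg_space n t \<Longrightarrow> w \<in> msg_space n t \<Longrightarrow> override_on x w W \<in> msg_space n t"
  by (auto simp: msg_space_def override_on_def)

lemma card_correctly_decoded:
  "real (card (correctly_decoded n A t phi psi))
     = (1 - error_prob n A t phi psi) * card (msg_space n t)"
proof -
  define M where "M = msg_space n t"
  define E where "E = {x. \<exists>i\<in>{1..n}. decoded n A phi psi x i \<noteq> x i}"
  have "correctly_decoded n A t phi psi = M - M \<inter> E"
    by (auto simp: correctly_decoded_def M_def E_def)
  moreover have "error_prob n A t phi psi = card (M \<inter> E) / card M"
    using finite_msg_space msg_space_not_empty
    by (simp add: error_prob_def measure_pmf_of_set M_def E_def)
  moreover have "card M > 0"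
    using finite_msg_space msg_space_not_empty by (simp add: M_def card_gt_0_iff)
  ultimately show ?thesis
    using finite_msg_space
    by (simp add: M_def card_Diff_subset card_mono of_nat_diff field_simps)
qed

lemma finite_servers: "finite (servers n)"
  by (rule finite_subset[of _ "Pow {1..n}"]) (auto simp: servers_def)

lemma server_outputs_in_PiE:
  assumes "is_code n A t r phi psi" "x \<in> msg_space n t" "S \<subseteq> servers n"
  shows "restrict (server_out n phi x) S \<in> (\<Pi>\<^sub>E J\<in>S. {xs :: bool list. length xs = r J})"
  using assms by (auto simp: is_code_def server_out_def)

lemma card_server_outputs:
  "finite S \<Longrightarrow> card (\<Pi>\<^sub>E J\<in>S. {xs :: bool list. length xs = r J}) = 2 ^ (\<Sum>J\<in>S. r J)"
  by (simp add: card_PiE card_bool_lists_length power_sum)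

subsection \<open>Recovering a message from server outputs\<close>

text \<open>The coordinates on which two correctly decoded messages with equal server outputs agree
  form a set closed under the receivers' decoding rules.\<close>

lemma cl_subset_agreement:
  assumes "x \<in> correctly_decoded n A t phi psi" "x' \<in> correctly_decoded n A t phi psi"
    and "server_out n phi x = server_out n phi x'"
    and "T \<subseteq> {i. x i = x' i}"
  shows "cl n A T \<subseteq> {i. x i = x' i}"
  unfolding cl_def
proof (rule Inter_lower, safe)
  fix i assume "i \<in> {1..n}" "A i \<subseteq> {i. x i = x' i}"
  then have "restr x (A i) = restr x' (A i)"
    by (auto simp: restr_def fun_eq_iff)
  then have "decoded n A phi psi x i = decoded n A phi psi x' i"
    using assms(3) by (simp add: decoded_def)
  then show "x i = x' i"
    using assms(1,2) \<open>i \<in> {1..n}\<close> by (simp add: correctly_decoded_def)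
qed (use assms(4) in auto)

lemma server_out_override_on_eq:
  assumes "server_out n phi x = server_out n phi x'" "U \<subseteq> {i. x i = x' i}"
    and "\<forall>J\<in>crossing_servers n U V.
           server_out n phi (override_on x w W) J = server_out n phi (override_on x' w W) J"
    and W: "W = {1..n} - (U \<union> V)"
  shows "server_out n phi (override_on x w W) = server_out n phi (override_on x' w W)"
proof
  fix J
  consider "J \<notin> servers n" | "J \<in> crossing_servers n U V"
    | "J \<in> servers n" "J \<inter> V = {}" | "J \<in> servers n" "J \<subseteq> U \<union> V"
    by (auto simp: crossing_servers_def)
  then show "server_out n phi (override_on x w W) J = server_out n phi (override_on x' w W) J"
  proof cases
    case 3
    then have "restr (override_on x w W) J = restr (override_on x' w W) J"
      using assms(2) W by (auto simp: servers_def restr_def override_on_def fun_eq_iff)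
    then show ?thesis by (simp add: server_out_def)
  next
    case 4
    then have "restr (override_on x w W) J = restr x J" "restr (override_on x' w W) J = restr x' J"
      using W by (auto simp: restr_def override_on_def fun_eq_iff)
    moreover have "server_out n phi x J = server_out n phi x' J"
      using assms(1) by simp
    ultimately show ?thesis
      using 4 by (simp add: server_out_def)
  qed (use assms(3) in \<open>auto simp: server_out_def\<close>)
qed

lemma inj_on_server_outputs:
  fixes n :: nat and U V :: "nat set"
  assumes W: "W = {1..n} - (U \<union> V)"
    and U: "U \<subseteq> cl n A {}"
    and V_cl: "cl n A (U \<union> V) = {1..n}"
    and cond1: "V \<subseteq> cl n A ({1..n} - V)"
  shows "inj_on (\<lambda>x. (restrict (server_out n phi x) (servers n),
                      restrict (server_out n phi (override_on x w W)) (crossing_servers n U V)))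
           {x \<in> correctly_decoded n A t phi psi. override_on x w W \<in> correctly_decoded n A t phi psi}"
proof (rule inj_onI, clarsimp)
  fix x x'
  assume x: "x \<in> correctly_decoded n A t phi psi" "override_on x w W \<in> correctly_decoded n A t phi psi"
    and x': "x' \<in> correctly_decoded n A t phi psi" "override_on x' w W \<in> correctly_decoded n A t phi psi"
    and out: "restrict (server_out n phi x) (servers n) = restrict (server_out n phi x') (servers n)"
    and out_crossing: "restrict (server_out n phi (override_on x w W)) (crossing_servers n U V)
                     = restrict (server_out n phi (override_on x' w W)) (crossing_servers n U V)"
  have same_out: "server_out n phi x = server_out n phi x'"
  proof
    fix J show "server_out n phi x J = server_out n phi x' J"
      using fun_cong[OF out, of J] by (cases "J \<in> servers n") (simp_all add: server_out_def)
  qed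
  have U_agree: "U \<subseteq> {i. x i = x' i}"
    using cl_subset_agreement[OF x(1) x'(1) same_out, of "{}"] U by blast
  have "server_out n phi (override_on x w W) = server_out n phi (override_on x' w W)"
    using out_crossing
    by (intro server_out_override_on_eq[OF same_out U_agree _ W]) (metis restrict_apply')
  moreover have "{1..n} - V \<subseteq> {i. override_on x w W i = override_on x' w W i}"
    using U_agree by (auto simp: override_on_def W)
  ultimately have "V \<subseteq> {i. override_on x w W i = override_on x' w W i}"
    using cl_subset_agreement[OF x(2) x'(2)] cond1 by blast
  then have "U \<union> V \<subseteq> {i. x i = x' i}"
    using U_agree by (auto simp: override_on_def W)
  then have "{1..n} \<subseteq> {i. x i = x' i}"
    using cl_subset_agreement[OF x(1) x'(1) same_out] V_cl by metis
  moreover have "x i = x' i" if "i \<notin> {1..n}" for i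
    using x(1) x'(1) that by (simp add: correctly_decoded_def msg_space_def)
  ultimately show "x = x'"
    by blast
qed

lemma sum_message_lengths_le:
  fixes U V :: "nat set"
  assumes U: "U \<subseteq> cl n A {}"
    and V_cl: "cl n A (U \<union> V) = {1..n}"
    and cond1: "V \<subseteq> cl n A ({1..n} - V)"
    and code: "is_code n A t r phi psi"
    and err: "error_prob n A t phi psi < 1/4"
  shows "(\<Sum>i\<in>{1..n}. t i) \<le> (\<Sum>J\<in>servers n. r J) + (\<Sum>J\<in>crossing_servers n U V. r J)"
    (is "?T \<le> ?K")
proof -
  define W where "W = {1..n} - (U \<union> V)"
  define D where "D = correctly_decoded n A t phi psi"
  define Out where "Out S = (\<Pi>\<^sub>E J\<in>S. {xs :: bool list. length xs = r J})" for S
  have fin_crossing: "finite (crossing_servers n U V)"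
    using finite_servers by (rule rev_finite_subset) (auto simp: crossing_servers_def)
  have "D \<subseteq> msg_space n t"
    by (auto simp: D_def correctly_decoded_def)
  then have "\<exists>w\<in>msg_space n t.
      2 * card D \<le> card {x \<in> D. override_on x w W \<in> D} + card (msg_space n t)"
    by (rule exists_override_on_bound[OF finite_msg_space msg_space_not_empty _ override_on_in_msg_space])
  then obtain w where
    w: "2 * card D \<le> card {x \<in> D. override_on x w W \<in> D} + card (msg_space n t)"
    by blast
  let ?out = "\<lambda>x. (restrict (server_out n phi x) (servers n),
                   restrict (server_out n phi (override_on x w W)) (crossing_servers n U V))"
  have "inj_on ?out {x \<in> D. override_on x w W \<in> D}"
    unfolding D_def by (rule inj_on_server_outputs[OF W_def U V_cl cond1])
  moreover have "?out ` {x \<in> D. override_on x w W \<in> D}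
      \<subseteq> Out (servers n) \<times> Out (crossing_servers n U V)"
  proof -
    have "crossing_servers n U V \<subseteq> servers n"
      by (auto simp: crossing_servers_def)
    then show ?thesis
      using \<open>D \<subseteq> msg_space n t\<close> server_outputs_in_PiE[OF code] unfolding Out_def by blast
  qed
  moreover have "finite (Out (servers n) \<times> Out (crossing_servers n U V))"
    by (simp add: Out_def finite_PiE finite_bool_lists_length finite_servers fin_crossing)
  ultimately have "card {x \<in> D. override_on x w W \<in> D}
      \<le> card (Out (servers n) \<times> Out (crossing_servers n U V))"
    by (rule card_inj_on_le)
  also have "\<dots> = 2 ^ ?K"
    by (simp add: Out_def card_cartesian_product card_server_outputs finite_servers fin_crossing
        power_add)
  finally have "2 * card D \<le> 2 ^ ?K + 2 ^ ?T"
    using w by (simp add: card_msg_space)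
  then have "2 * real (card D) \<le> 2 ^ ?K + 2 ^ ?T"
    using of_nat_le_iff[of "2 * card D" "2 ^ ?K + 2 ^ ?T", where 'a = real] by simp
  moreover have "real (card D) > 3/4 * 2 ^ ?T"
    using err by (simp add: D_def card_correctly_decoded card_msg_space)
  ultimately have "(2::real) ^ ?T < 2 ^ Suc ?K"
    by (simp only: power_Suc)
  then have "?T < Suc ?K"
    by (rule power_less_imp_less_exp[rotated]) simp
  then show ?thesis
    by simp
qed

lemma achievable_sum_rates_le:
  fixes U V :: "nat set"
  assumes U: "U \<subseteq> cl n A {}"
    and V_cl: "cl n A (U \<union> V) = {1..n}"
    and cond1: "V \<subseteq> cl n A ({1..n} - V)"
    and "achievable n A R C"
  shows "(\<Sum>i\<in>{1..n}. R i) \<le> (\<Sum>J\<in>servers n. C J) + (\<Sum>J\<in>crossing_servers n U V. C J)"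
proof -
  obtain t r phi psi and rr :: nat where "rr > 0" and code: "is_code n A t r phi psi"
    and R: "\<forall>i\<in>{1..n}. R i \<le> real (t i) / real rr"
    and C: "\<forall>J\<in>servers n. C J \<ge> real (r J) / real rr"
    and err: "error_prob n A t phi psi \<le> 1/8"
    using \<open>achievable n A R C\<close> unfolding achievable_def
    by (meson zero_less_divide_1_iff zero_less_numeral)
  have "(\<Sum>i\<in>{1..n}. t i) \<le> (\<Sum>J\<in>servers n. r J) + (\<Sum>J\<in>crossing_servers n U V. r J)"
    by (rule sum_message_lengths_le[OF U V_cl cond1 code]) (use err in simp)
  then have lengths: "real (\<Sum>i\<in>{1..n}. t i)
      \<le> real ((\<Sum>J\<in>servers n. r J) + (\<Sum>J\<in>crossing_servers n U V. r J))"
    by (simp only: of_nat_le_iff)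
  have "(\<Sum>i\<in>{1..n}. R i) \<le> (\<Sum>i\<in>{1..n}. real (t i) / real rr)"
    using R by (intro sum_mono) auto
  also have "\<dots> \<le> (\<Sum>J\<in>servers n. real (r J) / real rr)
                 + (\<Sum>J\<in>crossing_servers n U V. real (r J) / real rr)"
    using lengths \<open>rr > 0\<close>
    by (simp add: divide_right_mono flip: sum_divide_distrib add_divide_distrib)
  also have "\<dots> \<le> (\<Sum>J\<in>servers n. C J) + (\<Sum>J\<in>crossing_servers n U V. C J)"
    using C by (intro add_mono sum_mono) (auto simp: crossing_servers_def)
  finally show ?thesis .
qed

theorem theorem2:
  fixes n :: nat and A :: "nat \<Rightarrow> nat set" and C :: "nat set \<Rightarrow> real"
    and U V :: "nat set" and R :: "nat \<Rightarrow> real"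
  assumes side_info: "\<forall>i\<in>{1..n}. A i \<subseteq> {1..n} - {i}"
    and cap_nonneg: "\<forall>J\<in>servers n. C J \<ge> 0"
    and U_def: "U = cl n A {}"
    and V_sub: "V \<subseteq> {1..n} - U"
    and V_cl: "cl n A (U \<union> V) = {1..n}"
    and V_min: "\<forall>W. W \<subseteq> {1..n} - U \<and> cl n A (U \<union> W) = {1..n} \<longrightarrow> card V \<le> card W"
    and cond1: "V \<subseteq> cl n A ({1..n} - V)"
    and R_in: "R \<in> capacity_region n A C"
  shows "(\<Sum>i\<in>{1..n}. R i) \<le> (\<Sum>J\<in>servers n. C J)
           + (\<Sum>J\<in>{J\<in>servers n. J \<inter> V \<noteq> {} \<and> \<not> J \<subseteq> U \<union> V}. C J)"
proof -
  define B where "B = (\<Sum>J\<in>servers n. C J) + (\<Sum>J\<in>crossing_servers n U V. C J)"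
  have "capacity_region n A C \<subseteq> {R. (\<Sum>i\<in>{1..n}. R i) \<le> B}"
    unfolding capacity_region_def
  proof (rule closure_minimal)
    show "closed {R :: nat \<Rightarrow> real. (\<Sum>i\<in>{1..n}. R i) \<le> B}"
      by (intro closed_Collect_le continuous_intros) auto
  qed (use achievable_sum_rates_le[OF U_def[THEN equalityD1] V_cl cond1] in \<open>auto simp: B_def\<close>)
  then show ?thesis
    using R_in by (auto simp: B_def crossing_servers_def)
qed

end
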